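(* Let $\lambda$ be a partition of $n$ and $0\le k\le n-1$. Then $$\mathrm{QYT}_{=k+1}(\lambda)=\sum_{m=0}^{k}\binom{n+1}{k-m}(-1)^{k-m}\,\mathrm{SSYT}_{m+1}(\lambda),$$ where both sides denote numbers of tableaux.
   Context: A semistandard Young tableau (SSYT) of shape $\lambda$ is a filling of the Young diagram of $\lambda$ with positive integers weakly increasing along rows and strictly increasing up columns (French convention: rows counted from bottom to top). $\mathrm{SSYT}_{m}(\lambda)$ is the number of SSYT of shape $\lambda$ with all entries at most $m$. A quasi-Yamanouchi tableau (QYT) is an SSYT such that whenever an entry $i\ge2$ appears, some instance of $i$ lies in a strictly higher row than some instance of $i-1$. $\mathrm{QYT}_{=m}(\lambda)$ is the number of QYT of shape $\lambda$ whose largest entry is exactly $m$. *)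

theory Defs
  imports Main
begin

definition is_partition :: "nat list \<Rightarrow> nat \<Rightarrow> bool" where
  "is_partition la n \<longleftrightarrow> sorted_wrt (\<ge>) la \<and> (\<forall>x\<in>set la. 0 < x) \<and> sum_list la = n"

text \<open>Cells of the Young diagram (French convention): (row, column), 0-indexed,
  row 0 is the bottom row, row i has la!i cells.\<close>
definition cells :: "nat list \<Rightarrow> (nat \<times> nat) set" where
  "cells la = {(i, j). i < length la \<and> j < la ! i}"

text \<open>A filling T is an SSYT of shape la. Fillings are functions on nat \<times> nat,
  normalised to 0 outside the diagram so that each tableau is represented once.\<close>
definition ssyt :: "nat list \<Rightarrow> (nat \<times> nat \<Rightarrow> nat) \<Rightarrow> bool" where
  "ssyt la T \<longleftrightarrow>
     (\<forall>c. c \<notin> cells la \<longrightarrow> T c = 0) \<and>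
     (\<forall>c\<in>cells la. 1 \<le> T c) \<and>
     (\<forall>i j j'. (i, j) \<in> cells la \<and> (i, j') \<in> cells la \<and> j < j' \<longrightarrow> T (i, j) \<le> T (i, j')) \<and>
     (\<forall>i i' j. (i, j) \<in> cells la \<and> (i', j) \<in> cells la \<and> i < i' \<longrightarrow> T (i, j) < T (i', j))"

definition SSYT :: "nat \<Rightarrow> nat list \<Rightarrow> nat" where
  "SSYT m la = card {T. ssyt la T \<and> (\<forall>c\<in>cells la. T c \<le> m)}"

definition qyt :: "nat list \<Rightarrow> (nat \<times> nat \<Rightarrow> nat) \<Rightarrow> bool" where
  "qyt la T \<longleftrightarrow> ssyt la T \<and>
     (\<forall>v. 2 \<le> v \<and> (\<exists>c\<in>cells la. T c = v) \<longrightarrow>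
        (\<exists>c\<in>cells la. \<exists>c'\<in>cells la. T c = v \<and> T c' = v - 1 \<and> fst c' < fst c))"

definition QYT_eq :: "nat \<Rightarrow> nat list \<Rightarrow> nat" where
  "QYT_eq m la = card {T. qyt la T \<and> (\<forall>c\<in>cells la. T c \<le> m) \<and> (\<exists>c\<in>cells la. T c = m)}"

end

theory Submission
  imports Defs "HOL-Library.Product_Lexorder" "HOL-Computational_Algebra.Formal_Power_Series"
begin

(* Every semistandard tableau T with entries at most m factors uniquely as
   T = Q + B - 1, where Q is a quasi-Yamanouchi tableau, say with largest entry j, and B is
   weakly increasing along the standardization order of Q (cells by entry, equal entries from
   left to right) with values in {1..m+1-j}. Existence: while some value v >= 2 never sits
   strictly above v - 1, lower every entry >= v by one; this keeps T semistandard and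
   preserves its standardization order. Uniqueness: along its standardization order a
   quasi-Yamanouchi tableau starts with 1 and increases by one exactly when the next cell lies
   in a strictly higher row, so it is determined by that order. Counting the B's gives
   SSYT_m = sum_j QYT_=j * C(m - j + n, n): the generating function of the SSYT_(m+1) is that
   of the QYT_=(j+1) divided by (1 - x)^(n+1), and multiplying by (1 - x)^(n+1) inverts it. *)

unbundle fps_syntax

section \<open>Weakly increasing functions on a finite linear order\<close>

lemma finite_ex_greatest:
  fixes f :: "'a \<Rightarrow> 'b::linorder"
  assumes "finite A" "A \<noteq> {}"
  obtains x where "x \<in> A" "\<And>y. y \<in> A \<Longrightarrow> f y \<le> f x"
proof -
  have "Max (f ` A) \<in> f ` A"
    using assms by simp
  then obtain x where "x \<in> A" "f x = Max (f ` A)"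
    by auto
  then show ?thesis
    using that assms by simp
qed

lemma finite_ex_predecessor:
  fixes f :: "'a \<Rightarrow> 'b::linorder"
  assumes "finite A" "x \<in> A" "f x < f c"
  obtains p where "p \<in> A" "f p < f c" "\<And>y. y \<in> A \<Longrightarrow> \<not> (f p < f y \<and> f y < f c)"
proof -
  let ?below = "{y \<in> A. f y < f c}"
  have "finite ?below" "?below \<noteq> {}"
    using assms by auto
  then obtain p where p: "p \<in> ?below" and greatest: "\<And>y. y \<in> ?below \<Longrightarrow> f y \<le> f p"
    by (rule finite_ex_greatest[where f = f]) blast
  show ?thesis
  proof (rule that)
    show "p \<in> A" "f p < f c"
      using p by auto
  next
    fix y assume "y \<in> A"
    then show "\<not> (f p < f y \<and> f y < f c)"
      using greatest[of y] by auto
  qed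
qed

definition mono_funs :: "'a set \<Rightarrow> ('a \<Rightarrow> 'b::linorder) \<Rightarrow> nat \<Rightarrow> ('a \<Rightarrow> nat) set" where
  "mono_funs S key N = {B. (\<forall>x. x \<notin> S \<longrightarrow> B x = 0) \<and> (\<forall>x\<in>S. 1 \<le> B x \<and> B x \<le> N)
      \<and> (\<forall>x\<in>S. \<forall>y\<in>S. key x < key y \<longrightarrow> B x \<le> B y)}"

lemma mono_funsD:
  assumes "B \<in> mono_funs S key N"
  shows "x \<notin> S \<Longrightarrow> B x = 0" and "x \<in> S \<Longrightarrow> 1 \<le> B x" and "x \<in> S \<Longrightarrow> B x \<le> N"
    and "x \<in> S \<Longrightarrow> y \<in> S \<Longrightarrow> key x < key y \<Longrightarrow> B x \<le> B y"
  using assms by (simp_all add: mono_funs_def)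

lemma finite_mono_funs: "finite S \<Longrightarrow> finite (mono_funs S key N)"
  by (rule finite_subset[OF _ finite_set_of_finite_funs[of S "{..N}" 0]])
    (auto simp: mono_funs_def)

lemma fun_upd_in_mono_funs:
  assumes "B \<in> mono_funs (S - {x}) key (Suc N)" "x \<in> S"
    and below: "\<And>y. y \<in> S \<Longrightarrow> y \<noteq> x \<Longrightarrow> key y < key x"
  shows "B(x := Suc N) \<in> mono_funs S key (Suc N)"
proof -
  have "(B(x := Suc N)) y \<le> (B(x := Suc N)) z" if "y \<in> S" "z \<in> S" "key y < key z" for y z
  proof (cases "z = x")
    case True
    then show ?thesis
      using assms(1) that by (auto simp: mono_funs_def)
  next
    case False
    then have "y \<noteq> x"
      using below[of z] that by auto
    then show ?thesis
      using assms(1) that False by (auto simp: mono_funs_def)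
  qed
  then show ?thesis
    using assms(1,2) by (auto simp: mono_funs_def)
qed

lemma mono_funs_Suc:
  assumes "x \<in> S" and below: "\<And>y. y \<in> S \<Longrightarrow> y \<noteq> x \<Longrightarrow> key y < key x"
  shows "mono_funs S key (Suc N)
    = mono_funs S key N \<union> (\<lambda>B. B(x := Suc N)) ` mono_funs (S - {x}) key (Suc N)"
proof (intro equalityI subsetI)
  fix B assume B: "B \<in> mono_funs S key (Suc N)"
  show "B \<in> mono_funs S key N \<union> (\<lambda>B. B(x := Suc N)) ` mono_funs (S - {x}) key (Suc N)"
  proof (cases "B x \<le> N")
    case True
    then have "\<forall>y\<in>S. B y \<le> N"
      using mono_funsD(4)[OF B _ \<open>x \<in> S\<close>] below by (metis le_trans order_refl)
    then show ?thesis
      using B by (auto simp: mono_funs_def)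
  next
    case False
    then have "B = (B(x := 0))(x := Suc N)"
      using mono_funsD(3)[OF B \<open>x \<in> S\<close>] by (simp add: fun_upd_idem)
    moreover have "B(x := 0) \<in> mono_funs (S - {x}) key (Suc N)"
      using B by (auto simp: mono_funs_def)
    ultimately show ?thesis
      by blast
  qed
next
  fix B assume "B \<in> mono_funs S key N \<union> (\<lambda>B. B(x := Suc N)) ` mono_funs (S - {x}) key (Suc N)"
  then show "B \<in> mono_funs S key (Suc N)"
    using fun_upd_in_mono_funs[of _ S x key N, OF _ assms] by (auto simp: mono_funs_def)
qed

lemma card_mono_funs_Suc:
  assumes "finite S" "x \<in> S" and below: "\<And>y. y \<in> S \<Longrightarrow> y \<noteq> x \<Longrightarrow> key y < key x"
  shows "card (mono_funs S key (Suc N))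
    = card (mono_funs S key N) + card (mono_funs (S - {x}) key (Suc N))"
proof -
  have "inj_on (\<lambda>B. B(x := Suc N)) (mono_funs (S - {x}) key (Suc N))"
  proof (rule inj_onI)
    fix B B' assume "B \<in> mono_funs (S - {x}) key (Suc N)" "B' \<in> mono_funs (S - {x}) key (Suc N)"
      and "B(x := Suc N) = B'(x := Suc N)"
    moreover from this have "B x = 0" "B' x = 0"
      by (auto simp: mono_funs_def)
    ultimately show "B = B'"
      by (metis fun_upd_triv fun_upd_upd)
  qed
  moreover have "mono_funs S key N \<inter> (\<lambda>B. B(x := Suc N)) ` mono_funs (S - {x}) key (Suc N) = {}"
    using \<open>x \<in> S\<close> by (auto simp: mono_funs_def)
  moreover note mono_funs_Suc[of x S key N, OF assms(2,3)]
  ultimately show ?thesis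
    using assms(1) by (simp add: card_Un_disjoint finite_mono_funs card_image)
qed

lemma card_mono_funs:
  fixes key :: "'a \<Rightarrow> 'b::linorder"
  assumes "finite S" "inj_on key S"
  shows "card (mono_funs S key N) = (N + card S - 1) choose card S"
  using assms
proof (induction "card S" arbitrary: S N)
  case 0
  then have "S = {}"
    by simp
  then have "mono_funs S key N = {\<lambda>_. 0}"
    by (auto simp: mono_funs_def)
  then show ?case
    using \<open>S = {}\<close> by simp
next
  case (Suc s)
  have card_S: "card S = Suc s"
    using Suc.hyps(2) by simp
  have "S \<noteq> {}"
    using card_S by auto
  then obtain x where x: "x \<in> S" "\<And>y. y \<in> S \<Longrightarrow> key y \<le> key x"
    using finite_ex_greatest[OF Suc.prems(1)] by blast
  have below: "key y < key x" if "y \<in> S" "y \<noteq> x" for y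
    using x that Suc.prems(2) by (metis inj_onD order_le_less)
  have IH: "card (mono_funs (S - {x}) key M) = (M + s - 1) choose s" for M
    using Suc.hyps(1)[of "S - {x}" M] Suc.prems x(1) card_S by (simp add: inj_on_diff)
  show ?case
  proof (induction N)
    case 0
    have "mono_funs S key 0 = {}"
      using x(1) by (auto simp: mono_funs_def)
    then show ?case
      using card_S by simp
  next
    case (Suc N)
    then show ?case
      using card_mono_funs_Suc[of S x key N, OF \<open>finite S\<close> x(1) below] IH card_S by simp
  qed
qed

section \<open>Inverting a convolution with binomial coefficients\<close>

lemma one_minus_X_mult_nth:
  "((1 - fps_X) * f :: 'a::comm_ring_1 fps) $ j = f $ j - (if j = 0 then 0 else f $ (j - 1))"
  by (simp add: left_diff_distrib)

lemma fps_one_minus_X_power_nth: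
  "((1 - fps_X) ^ n :: 'a::comm_ring_1 fps) $ t = (-1) ^ t * of_nat (n choose t)"
proof (induction n arbitrary: t)
  case 0
  then show ?case
    by (cases t) simp_all
next
  case (Suc n)
  then show ?case
    by (cases t) (simp_all add: one_minus_X_mult_nth algebra_simps)
qed

lemma one_minus_X_mult_binomials:
  "(1 - fps_X) * Abs_fps (\<lambda>j. of_nat ((j + Suc n) choose Suc n))
     = (Abs_fps (\<lambda>j. of_nat ((j + n) choose n)) :: 'a::comm_ring_1 fps)"
proof (rule fps_ext)
  fix j
  show "((1 - fps_X) * Abs_fps (\<lambda>j. of_nat ((j + Suc n) choose Suc n))) $ j
      = (Abs_fps (\<lambda>j. of_nat ((j + n) choose n)) :: 'a fps) $ j"
  proof (cases j)
    case 0
    then show ?thesis by (simp add: one_minus_X_mult_nth binomial_eq_0)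
  next
    case (Suc i)
    have "(j + Suc n) choose Suc n = ((i + Suc n) choose Suc n) + ((j + n) choose n)"
      using Suc by simp
    then show ?thesis
      using Suc by (simp add: one_minus_X_mult_nth)
  qed
qed

lemma one_minus_X_power_mult_binomials:
  "(1 - fps_X) ^ (n + 1) * Abs_fps (\<lambda>j. of_nat ((j + n) choose n)) = (1 :: 'a::comm_ring_1 fps)"
proof (induction n)
  case 0
  show ?case
    by (rule fps_ext) (simp add: one_minus_X_mult_nth)
next
  case (Suc n)
  have "(1 - fps_X) ^ (Suc n + 1) * Abs_fps (\<lambda>j. of_nat ((j + Suc n) choose Suc n))
      = (1 - fps_X) ^ (n + 1) * ((1 - fps_X) * Abs_fps (\<lambda>j. of_nat ((j + Suc n) choose Suc n)))"
    by (simp only: add_Suc power_Suc2 mult.assoc)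
  also have "\<dots> = (1 :: 'a fps)"
    by (simp only: one_minus_X_mult_binomials Suc.IH)
  finally show ?case .
qed

lemma binomial_inversion:
  fixes q s :: "nat \<Rightarrow> 'a::comm_ring_1"
  assumes "\<And>m. s m = (\<Sum>j = 0..m. q j * of_nat ((m - j + n) choose n))"
  shows "q k = (\<Sum>m = 0..k. of_nat ((n + 1) choose (k - m)) * (-1) ^ (k - m) * s m)"
proof -
  define B :: "'a fps" where "B = Abs_fps (\<lambda>j. of_nat ((j + n) choose n))"
  have S: "Abs_fps s = Abs_fps q * B"
    by (rule fps_ext) (simp add: B_def assms fps_mult_nth add.commute)
  have "Abs_fps q = Abs_fps q * ((1 - fps_X) ^ (n + 1) * B)"
    by (simp only: B_def one_minus_X_power_mult_binomials mult_1_right)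
  also have "\<dots> = Abs_fps s * (1 - fps_X) ^ (n + 1)"
    by (simp only: S mult.assoc mult.commute[of "(1 - fps_X) ^ (n + 1)" B])
  finally have "q k = (Abs_fps s * (1 - fps_X) ^ (n + 1)) $ k"
    by (metis fps_nth_Abs_fps)
  also have "\<dots> = (\<Sum>m = 0..k. s m * ((-1) ^ (k - m) * of_nat ((n + 1) choose (k - m))))"
    by (simp only: fps_mult_nth fps_nth_Abs_fps fps_one_minus_X_power_nth)
  also have "\<dots> = (\<Sum>m = 0..k. of_nat ((n + 1) choose (k - m)) * (-1) ^ (k - m) * s m)"
    by (simp only: mult_ac)
  finally show ?thesis .
qed

section \<open>Semistandard tableaux and their standardization\<close>

lemma cells_Sigma: "cells la = (SIGMA i:{..<length la}. {..<la ! i})"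
  by (auto simp: cells_def)

lemma finite_cells: "finite (cells la)"
  by (simp add: cells_Sigma)

lemma card_cells: "card (cells la) = sum_list la"
  by (simp add: cells_Sigma sum_list_sum_nth atLeast0LessThan)

lemma cell_below:
  assumes "sorted_wrt (\<ge>) la" "(i', j) \<in> cells la" "i \<le> i'"
  shows "(i, j) \<in> cells la"
proof -
  have "la ! i' \<le> la ! i"
    using assms by (cases "i = i'") (auto simp: cells_def sorted_wrt_iff_nth_less)
  then show ?thesis
    using assms(2,3) by (auto simp: cells_def)
qed

lemma ssyt_zero_outside: "ssyt la T \<Longrightarrow> c \<notin> cells la \<Longrightarrow> T c = 0"
  unfolding ssyt_def by blast

lemma ssyt_pos: "ssyt la T \<Longrightarrow> c \<in> cells la \<Longrightarrow> 1 \<le> T c"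
  unfolding ssyt_def by blast

lemma ssyt_row_mono:
  "ssyt la T \<Longrightarrow> (i, j) \<in> cells la \<Longrightarrow> (i, j') \<in> cells la \<Longrightarrow> j \<le> j' \<Longrightarrow> T (i, j) \<le> T (i, j')"
  unfolding ssyt_def by (metis order_le_less order_refl)

lemma ssyt_col_strict:
  "ssyt la T \<Longrightarrow> (i, j) \<in> cells la \<Longrightarrow> (i', j) \<in> cells la \<Longrightarrow> i < i' \<Longrightarrow> T (i, j) < T (i', j)"
  unfolding ssyt_def by blast

lemma ssyt_weakly_below:
  assumes la: "sorted_wrt (\<ge>) la" and T: "ssyt la T"
    and cells: "x \<in> cells la" "y \<in> cells la" and "snd x \<le> snd y" "T y \<le> T x"
  shows "fst y \<le> fst x"
proof (rule ccontr)
  assume "\<not> fst y \<le> fst x"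
  obtain i j i' j' where xy: "x = (i, j)" "y = (i', j')"
    by (cases x, cases y)
  have "(i, j') \<in> cells la"
    using cell_below[OF la] cells(2) xy \<open>\<not> fst y \<le> fst x\<close> by simp
  then have "T (i, j) < T (i', j')"
    using ssyt_row_mono[OF T] ssyt_col_strict[OF T] cells xy \<open>snd x \<le> snd y\<close> \<open>\<not> fst y \<le> fst x\<close>
    by (metis fst_conv snd_conv le_less_trans not_le)
  then show False
    using \<open>T y \<le> T x\<close> xy by simp
qed

(* Compared lexicographically, these keys give the standardization order of T. *)
definition std_key :: "(nat \<times> nat \<Rightarrow> nat) \<Rightarrow> nat \<times> nat \<Rightarrow> nat \<times> nat" where
  "std_key T c = (T c, snd c)"

lemma std_key_less_iff: "std_key T c < std_key T d \<longleftrightarrow> T c < T d \<or> T c = T d \<and> snd c < snd d"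
  by (auto simp: std_key_def)

lemma std_key_le_iff: "std_key T c \<le> std_key T d \<longleftrightarrow> T c < T d \<or> T c = T d \<and> snd c \<le> snd d"
  by (auto simp: std_key_def)

lemma inj_on_std_key:
  assumes "ssyt la T"
  shows "inj_on (std_key T) (cells la)"
proof (rule inj_onI)
  fix c d assume cells: "c \<in> cells la" "d \<in> cells la" and "std_key T c = std_key T d"
  then have same: "T c = T d" "snd c = snd d"
    by (auto simp: std_key_def)
  obtain i j i' where cd: "c = (i, j)" "d = (i', j)"
    using same(2) by (cases c, cases d) auto
  have "\<not> i < i'" "\<not> i' < i"
    using ssyt_col_strict[OF assms] cells same(1) cd by (metis less_irrefl)+
  then show "c = d"
    using cd by simp
qed

definition shift_by :: "nat list \<Rightarrow> (nat \<times> nat \<Rightarrow> nat) \<Rightarrow> (nat \<times> nat \<Rightarrow> nat) \<Rightarrow> nat \<times> nat \<Rightarrow> nat" where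
  "shift_by la Q B c = (if c \<in> cells la then Q c + B c - 1 else 0)"

lemma std_key_shift_by_less_iff:
  assumes Q: "ssyt la Q" and B: "B \<in> mono_funs (cells la) (std_key Q) N"
    and cells: "c \<in> cells la" "d \<in> cells la"
  shows "std_key (shift_by la Q B) c < std_key (shift_by la Q B) d \<longleftrightarrow> std_key Q c < std_key Q d"
proof -
  have mono: "std_key (shift_by la Q B) c' < std_key (shift_by la Q B) d'"
    if "c' \<in> cells la" "d' \<in> cells la" "std_key Q c' < std_key Q d'" for c' d'
  proof -
    have "B c' \<le> B d'" "1 \<le> B c'" "1 \<le> B d'"
      using mono_funsD(2,4)[OF B] that by auto
    then show ?thesis
      using that by (auto simp: std_key_def shift_by_def)
  qed
  show ?thesis
  proof
    assume less: "std_key (shift_by la Q B) c < std_key (shift_by la Q B) d"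
    then have "c \<noteq> d"
      by auto
    then have "std_key Q c \<noteq> std_key Q d"
      using inj_on_std_key[OF Q] cells by (meson inj_onD)
    then show "std_key Q c < std_key Q d"
      using mono[OF cells(2,1)] less by (meson less_asym neqE)
  qed (use mono cells in blast)
qed

lemma ssyt_shift_by:
  assumes Q: "ssyt la Q" and B: "B \<in> mono_funs (cells la) (std_key Q) N"
  shows "ssyt la (shift_by la Q B)"
  unfolding ssyt_def
proof (intro conjI allI impI ballI)
  fix c assume "c \<notin> cells la"
  then show "shift_by la Q B c = 0"
    by (simp add: shift_by_def)
next
  fix c assume c: "c \<in> cells la"
  then have "1 \<le> Q c" "1 \<le> B c"
    using ssyt_pos[OF Q c] mono_funsD(2)[OF B c] by simp_all
  then show "1 \<le> shift_by la Q B c"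
    using c by (simp add: shift_by_def)
next
  fix i j j' assume row: "(i, j) \<in> cells la \<and> (i, j') \<in> cells la \<and> j < j'"
  then have "std_key Q (i, j) < std_key Q (i, j')"
    using ssyt_row_mono[OF Q] by (simp add: std_key_less_iff order_le_less)
  then have "std_key (shift_by la Q B) (i, j) < std_key (shift_by la Q B) (i, j')"
    using std_key_shift_by_less_iff[OF Q B] row by blast
  then show "shift_by la Q B (i, j) \<le> shift_by la Q B (i, j')"
    by (auto simp: std_key_less_iff)
next
  fix i i' j assume col: "(i, j) \<in> cells la \<and> (i', j) \<in> cells la \<and> i < i'"
  then have "std_key Q (i, j) < std_key Q (i', j)"
    using ssyt_col_strict[OF Q] by (simp add: std_key_less_iff)
  then have "std_key (shift_by la Q B) (i, j) < std_key (shift_by la Q B) (i', j)"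
    using std_key_shift_by_less_iff[OF Q B] col by blast
  then show "shift_by la Q B (i, j) < shift_by la Q B (i', j)"
    by (auto simp: std_key_less_iff)
qed

lemma shift_by_cancel:
  assumes B: "B \<in> mono_funs (cells la) key N" and B': "B' \<in> mono_funs (cells la) key' N'"
    and eq: "shift_by la Q B = shift_by la Q B'"
  shows "B = B'"
proof
  fix c show "B c = B' c"
  proof (cases "c \<in> cells la")
    case True
    then have "Q c + B c - 1 = Q c + B' c - 1"
      using fun_cong[OF eq, of c] by (simp add: shift_by_def)
    then show ?thesis
      using mono_funsD(2)[OF B True] mono_funsD(2)[OF B' True] by simp
  next
    case False
    then show ?thesis
      using mono_funsD(1)[OF B] mono_funsD(1)[OF B'] by simp
  qed
qed

section \<open>A quasi-Yamanouchi tableau is determined by its standardization\<close>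

lemma qyt_ssyt: "qyt la Q \<Longrightarrow> ssyt la Q"
  by (simp add: qyt_def)

lemma qyt_ascentE:
  assumes "qyt la Q" "c \<in> cells la" "2 \<le> Q c"
  obtains a b where "a \<in> cells la" "b \<in> cells la" "Q a = Q c" "Q b = Q c - 1" "fst b < fst a"
  using assms unfolding qyt_def by blast

lemma qyt_first_entry:
  assumes Q: "qyt la Q" and c: "c \<in> cells la"
    and first: "\<And>d. d \<in> cells la \<Longrightarrow> \<not> std_key Q d < std_key Q c"
  shows "Q c = 1"
proof (rule ccontr)
  assume "Q c \<noteq> 1"
  then have "2 \<le> Q c"
    using ssyt_pos[OF qyt_ssyt[OF Q] c] by simp
  then obtain b where "b \<in> cells la" "Q b = Q c - 1"
    using qyt_ascentE[OF Q c] by metis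
  then show False
    using first[of b] \<open>2 \<le> Q c\<close> by (simp add: std_key_less_iff)
qed

lemma qyt_next_entry:
  assumes la: "sorted_wrt (\<ge>) la" and Q: "qyt la Q"
    and cells: "p \<in> cells la" "c \<in> cells la" and pc: "std_key Q p < std_key Q c"
    and between: "\<And>d. d \<in> cells la \<Longrightarrow> \<not> (std_key Q p < std_key Q d \<and> std_key Q d < std_key Q c)"
  shows "Q c = Q p + (if fst p < fst c then 1 else 0)"
proof -
  have T: "ssyt la Q"
    using Q by (rule qyt_ssyt)
  consider "Q p = Q c" "snd p < snd c" | "Q p < Q c"
    using pc by (auto simp: std_key_less_iff)
  then show ?thesis
  proof cases
    case 1
    then have "fst c \<le> fst p"
      using ssyt_weakly_below[OF la T cells] by simp
    then show ?thesis
      using 1 by simp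
  next
    case 2
    then have "2 \<le> Q c"
      using ssyt_pos[OF T cells(1)] by simp
    then obtain a b where ab: "a \<in> cells la" "b \<in> cells la" "Q a = Q c" "Q b = Q c - 1"
      "fst b < fst a"
      using qyt_ascentE[OF Q cells(2)] by metis
    have "\<not> std_key Q p < std_key Q b"
      using between[OF ab(2)] ab(4) \<open>2 \<le> Q c\<close> by (auto simp: std_key_less_iff)
    then have Qp: "Q p = Q b" and "snd b \<le> snd p"
      using ab(4) 2 by (auto simp: std_key_less_iff)
    then have "fst p \<le> fst b"
      using ssyt_weakly_below[OF la T ab(2) cells(1)] by simp
    have "\<not> std_key Q a < std_key Q c"
      using between[OF ab(1)] pc ab(3) 2 by (auto simp: std_key_less_iff)
    then have "snd c \<le> snd a"
      using ab(3) by (auto simp: std_key_less_iff)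
    then have "fst a \<le> fst c"
      using ssyt_weakly_below[OF la T cells(2) ab(1)] ab(3) by simp
    then show ?thesis
      using Qp ab(4,5) \<open>fst p \<le> fst b\<close> \<open>2 \<le> Q c\<close> by simp
  qed
qed

lemma qyt_eqI:
  assumes la: "sorted_wrt (\<ge>) la" and Q: "qyt la Q" and Q': "qyt la Q'"
    and same_order: "\<And>c d. c \<in> cells la \<Longrightarrow> d \<in> cells la \<Longrightarrow>
      std_key Q c < std_key Q d \<longleftrightarrow> std_key Q' c < std_key Q' d"
  shows "Q = Q'"
proof -
  have "Q c = Q' c" if "c \<in> cells la" for c
    using that
  proof (induction "std_key Q c" arbitrary: c rule: less_induct)
    case (less c)
    show ?case
    proof (cases "\<exists>d\<in>cells la. std_key Q d < std_key Q c")
      case False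
      then have "\<not> std_key Q' d < std_key Q' c" if "d \<in> cells la" for d
        using that same_order[OF that less.prems] by blast
      then show ?thesis
        using False qyt_first_entry[OF Q less.prems] qyt_first_entry[OF Q' less.prems] by simp
    next
      case True
      then obtain p where p: "p \<in> cells la" "std_key Q p < std_key Q c"
        and between: "\<And>d. d \<in> cells la \<Longrightarrow> \<not> (std_key Q p < std_key Q d \<and> std_key Q d < std_key Q c)"
        using finite_ex_predecessor[OF finite_cells] by metis
      have between': "\<not> (std_key Q' p < std_key Q' d \<and> std_key Q' d < std_key Q' c)"
        if "d \<in> cells la" for d
        using between[OF that] same_order[OF p(1) that] same_order[OF that less.prems] by blast
      have "Q p = Q' p"
        using less.hyps p by blast
      moreover have "Q c = Q p + (if fst p < fst c then 1 else 0)"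
        using qyt_next_entry[OF la Q p(1) less.prems p(2) between] .
      moreover have "Q' c = Q' p + (if fst p < fst c then 1 else 0)"
        using qyt_next_entry[OF la Q' p(1) less.prems _ between'] same_order[OF p(1) less.prems] p(2)
        by blast
      ultimately show ?thesis
        by simp
    qed
  qed
  then show "Q = Q'"
    using ssyt_zero_outside[OF qyt_ssyt[OF Q]] ssyt_zero_outside[OF qyt_ssyt[OF Q']] by fastforce
qed

section \<open>Every semistandard tableau is a shifted quasi-Yamanouchi tableau\<close>

definition decr_from :: "nat \<Rightarrow> (nat \<times> nat \<Rightarrow> nat) \<Rightarrow> nat \<times> nat \<Rightarrow> nat" where
  "decr_from v T c = (if v \<le> T c then T c - 1 else T c)"

lemma ssyt_decr_from:
  assumes T: "ssyt la T" and "2 \<le> v"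
    and no_ascent: "\<And>c d. c \<in> cells la \<Longrightarrow> d \<in> cells la \<Longrightarrow> T c = v \<Longrightarrow> T d = v - 1 \<Longrightarrow> \<not> fst d < fst c"
  shows "ssyt la (decr_from v T)"
  unfolding ssyt_def
proof (intro conjI allI impI ballI)
  fix c assume "c \<notin> cells la"
  then show "decr_from v T c = 0"
    using ssyt_zero_outside[OF T] \<open>2 \<le> v\<close> by (simp add: decr_from_def)
next
  fix c assume "c \<in> cells la"
  then show "1 \<le> decr_from v T c"
    using ssyt_pos[OF T] \<open>2 \<le> v\<close> by (auto simp: decr_from_def)
next
  fix i j j' assume "(i, j) \<in> cells la \<and> (i, j') \<in> cells la \<and> j < j'"
  then have "T (i, j) \<le> T (i, j')"
    using ssyt_row_mono[OF T] by simp
  then show "decr_from v T (i, j) \<le> decr_from v T (i, j')"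
    by (auto simp: decr_from_def)
next
  fix i i' j assume col: "(i, j) \<in> cells la \<and> (i', j) \<in> cells la \<and> i < i'"
  then have "T (i, j) < T (i', j)" "\<not> (T (i', j) = v \<and> T (i, j) = v - 1)"
    using ssyt_col_strict[OF T] no_ascent[of "(i', j)" "(i, j)"] by auto
  then show "decr_from v T (i, j) < decr_from v T (i', j)"
    using \<open>2 \<le> v\<close> by (auto simp: decr_from_def)
qed

lemma decr_from_upward_closed:
  assumes la: "sorted_wrt (\<ge>) la" and T: "ssyt la T"
    and no_ascent: "\<And>c d. c \<in> cells la \<Longrightarrow> d \<in> cells la \<Longrightarrow> T c = v \<Longrightarrow> T d = v - 1 \<Longrightarrow> \<not> fst d < fst c"
    and cells: "c \<in> cells la" "d \<in> cells la"
    and less: "std_key (decr_from v T) c < std_key (decr_from v T) d" and "v \<le> T c"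
  shows "v \<le> T d"
proof (rule ccontr)
  assume "\<not> v \<le> T d"
  with less \<open>v \<le> T c\<close> have entries: "T c = v" "T d = v - 1" and "snd c < snd d"
    by (auto simp: std_key_less_iff decr_from_def)
  then have "fst d \<le> fst c"
    using ssyt_weakly_below[OF la T cells] by simp
  moreover have "fst d \<noteq> fst c"
    using ssyt_row_mono[OF T, of "fst c" "snd c" "snd d"] cells entries \<open>snd c < snd d\<close> \<open>\<not> v \<le> T d\<close>
    by (metis less_imp_le prod.collapse)
  ultimately show False
    using no_ascent[OF cells entries] by simp
qed

lemma decr_from_shift_by_lift:
  assumes T: "ssyt la T" and Q: "ssyt la Q" and B: "B \<in> mono_funs (cells la) key N"
    and decr: "decr_from v T = shift_by la Q B"
  shows "T = shift_by la Q (\<lambda>c. B c + (if v \<le> T c then 1 else 0))"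
proof
  fix c
  show "T c = shift_by la Q (\<lambda>c. B c + (if v \<le> T c then 1 else 0)) c"
  proof (cases "c \<in> cells la")
    case True
    then have "decr_from v T c = Q c + B c - 1" "1 \<le> Q c" "1 \<le> B c"
      using fun_cong[OF decr, of c] ssyt_pos[OF Q True] mono_funsD(2)[OF B True]
      by (simp_all add: shift_by_def)
    then show ?thesis
      using True by (auto simp: shift_by_def decr_from_def)
  next
    case False
    then show ?thesis
      using ssyt_zero_outside[OF T] by (simp add: shift_by_def)
  qed
qed

lemma decr_from_mono_funs_lift:
  assumes la: "sorted_wrt (\<ge>) la" and T: "ssyt la T" and bounded: "\<forall>c\<in>cells la. T c \<le> m"
    and "2 \<le> v"
    and no_ascent: "\<And>c d. c \<in> cells la \<Longrightarrow> d \<in> cells la \<Longrightarrow> T c = v \<Longrightarrow> T d = v - 1 \<Longrightarrow> \<not> fst d < fst c"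
    and Q: "ssyt la Q" and B: "B \<in> mono_funs (cells la) (std_key Q) m"
    and decr: "decr_from v T = shift_by la Q B"
  shows "(\<lambda>c. B c + (if v \<le> T c then 1 else 0)) \<in> mono_funs (cells la) (std_key Q) m"
  unfolding mono_funs_def
proof (intro CollectI conjI allI impI ballI)
  fix c assume "c \<notin> cells la"
  then show "B c + (if v \<le> T c then 1 else 0) = 0"
    using mono_funsD(1)[OF B] ssyt_zero_outside[OF T] \<open>2 \<le> v\<close> by simp
next
  fix c assume c: "c \<in> cells la"
  then show "1 \<le> B c + (if v \<le> T c then 1 else 0)"
    using mono_funsD(2)[OF B] by simp
  have "T c = Q c + (B c + (if v \<le> T c then 1 else 0)) - 1"
    using fun_cong[OF decr_from_shift_by_lift[OF T Q B decr], of c] c by (simp add: shift_by_def)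
  then show "B c + (if v \<le> T c then 1 else 0) \<le> m"
    using bspec[OF bounded c] ssyt_pos[OF Q c] by linarith
next
  fix c d assume cd: "c \<in> cells la" "d \<in> cells la" "std_key Q c < std_key Q d"
  then have "std_key (decr_from v T) c < std_key (decr_from v T) d"
    using std_key_shift_by_less_iff[OF Q B] decr by simp
  then have "v \<le> T c \<longrightarrow> v \<le> T d"
    using decr_from_upward_closed[OF la T no_ascent cd(1,2)] by blast
  then show "B c + (if v \<le> T c then 1 else 0) \<le> B d + (if v \<le> T d then 1 else 0)"
    using mono_funsD(4)[OF B cd] by auto
qed

lemma ex_qyt_shift_by:
  assumes la: "sorted_wrt (\<ge>) la" and "ssyt la T" "\<forall>c\<in>cells la. T c \<le> m"
  shows "\<exists>Q B. qyt la Q \<and> B \<in> mono_funs (cells la) (std_key Q) m \<and> T = shift_by la Q B"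
  using assms(2,3)
proof (induction "sum T (cells la)" arbitrary: T rule: less_induct)
  case less
  show ?case
  proof (cases "qyt la T")
    case True
    let ?B = "\<lambda>c. if c \<in> cells la then 1 else 0"
    have "?B \<in> mono_funs (cells la) (std_key T) m"
      using less.prems ssyt_pos[OF less.prems(1)] by (force simp: mono_funs_def)
    moreover have "T = shift_by la T ?B"
      using ssyt_zero_outside[OF less.prems(1)] by (auto simp: shift_by_def)
    ultimately show ?thesis
      using True by blast
  next
    case False
    then obtain v c0 where v: "2 \<le> v" "c0 \<in> cells la" "T c0 = v"
      and no_ascent: "\<And>c d. c \<in> cells la \<Longrightarrow> d \<in> cells la \<Longrightarrow> T c = v \<Longrightarrow> T d = v - 1 \<Longrightarrow> \<not> fst d < fst c"
      using less.prems(1) unfolding qyt_def by blast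
    have "sum (decr_from v T) (cells la) < sum T (cells la)"
    proof (rule sum_strict_mono_ex1[OF finite_cells])
      show "\<forall>c\<in>cells la. decr_from v T c \<le> T c"
        by (simp add: decr_from_def)
      show "\<exists>c\<in>cells la. decr_from v T c < T c"
        using v by (auto simp: decr_from_def)
    qed
    moreover have "ssyt la (decr_from v T)"
      using less.prems(1) v(1) no_ascent by (rule ssyt_decr_from)
    moreover have "\<forall>c\<in>cells la. decr_from v T c \<le> m"
      using less.prems(2) by (auto simp: decr_from_def)
    ultimately obtain Q B where Q: "qyt la Q" and B: "B \<in> mono_funs (cells la) (std_key Q) m"
      and decr: "decr_from v T = shift_by la Q B"
      using less.hyps by blast
    show ?thesis
      using Q decr_from_mono_funs_lift[OF la less.prems v(1) no_ascent qyt_ssyt[OF Q] B decr]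
        decr_from_shift_by_lift[OF less.prems(1) qyt_ssyt[OF Q] B decr] by blast
  qed
qed

section \<open>Counting\<close>

definition ssyts :: "nat \<Rightarrow> nat list \<Rightarrow> (nat \<times> nat \<Rightarrow> nat) set" where
  "ssyts m la = {T. ssyt la T \<and> (\<forall>c\<in>cells la. T c \<le> m)}"

definition qyts :: "nat \<Rightarrow> nat list \<Rightarrow> (nat \<times> nat \<Rightarrow> nat) set" where
  "qyts m la = {Q. qyt la Q \<and> (\<forall>c\<in>cells la. Q c \<le> m)}"

definition max_entry :: "nat list \<Rightarrow> (nat \<times> nat \<Rightarrow> nat) \<Rightarrow> nat" where
  "max_entry la T = Max (T ` cells la)"

lemma max_entry_eq_iff:
  "cells la \<noteq> {} \<Longrightarrow> max_entry la T = j \<longleftrightarrow> (\<forall>c\<in>cells la. T c \<le> j) \<and> (\<exists>c\<in>cells la. T c = j)"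
  by (auto simp: max_entry_def Max_eq_iff finite_cells)

lemma finite_qyts: "finite (qyts m la)"
  by (rule finite_subset[OF _ finite_set_of_finite_funs[of "cells la" "{..m}" 0]])
    (auto simp: qyts_def finite_cells dest: ssyt_zero_outside[OF qyt_ssyt])

lemma mono_funs_max_entry:
  assumes Q: "ssyt la Q" and B: "B \<in> mono_funs (cells la) (std_key Q) N"
    and bounded: "\<forall>c\<in>cells la. shift_by la Q B c \<le> m"
  shows "B \<in> mono_funs (cells la) (std_key Q) (m + 1 - max_entry la Q)"
proof (cases "cells la = {}")
  case True
  then show ?thesis
    using B by (simp add: mono_funs_def)
next
  case False
  then obtain d where d: "d \<in> cells la" and last: "\<And>c. c \<in> cells la \<Longrightarrow> std_key Q c \<le> std_key Q d"
    using finite_ex_greatest[OF finite_cells] by metis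
  have "B c \<le> B d" if "c \<in> cells la" for c
  proof (cases "c = d")
    case False
    then have "std_key Q c < std_key Q d"
      using last[OF that] inj_on_std_key[OF Q] that d by (metis inj_onD order_le_less)
    then show ?thesis
      using mono_funsD(4)[OF B that d] by simp
  qed simp
  have "Q c \<le> Q d" if "c \<in> cells la" for c
    using last[OF that] by (auto simp: std_key_le_iff)
  then have "max_entry la Q = Q d"
    using max_entry_eq_iff[OF False] d by blast
  moreover have "B d \<le> m + 1 - Q d"
    using bspec[OF bounded d] d mono_funsD(2)[OF B d] by (simp add: shift_by_def)
  ultimately have "\<forall>c\<in>cells la. B c \<le> m + 1 - max_entry la Q"
    using \<open>\<And>c. c \<in> cells la \<Longrightarrow> B c \<le> B d\<close> order_trans by metis
  then show ?thesis
    using B unfolding mono_funs_def mem_Collect_eq by blast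
qed

lemma shift_by_qyt_inject:
  assumes la: "sorted_wrt (\<ge>) la" and Q: "qyt la Q" "qyt la Q'"
    and B: "B \<in> mono_funs (cells la) (std_key Q) N" "B' \<in> mono_funs (cells la) (std_key Q') N'"
    and eq: "shift_by la Q B = shift_by la Q' B'"
  shows "Q = Q' \<and> B = B'"
proof -
  have "Q = Q'"
  proof (rule qyt_eqI[OF la Q])
    fix c d assume "c \<in> cells la" "d \<in> cells la"
    then show "std_key Q c < std_key Q d \<longleftrightarrow> std_key Q' c < std_key Q' d"
      using std_key_shift_by_less_iff[OF qyt_ssyt[OF Q(1)] B(1)]
        std_key_shift_by_less_iff[OF qyt_ssyt[OF Q(2)] B(2)] eq by simp
  qed
  moreover from this have "B = B'"
    using shift_by_cancel B eq by blast
  ultimately show ?thesis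
    by simp
qed

lemma shift_by_in_ssyts:
  assumes Q: "Q \<in> qyts m la" and B: "B \<in> mono_funs (cells la) (std_key Q) (m + 1 - max_entry la Q)"
  shows "shift_by la Q B \<in> ssyts m la"
proof -
  have "shift_by la Q B c \<le> m" if c: "c \<in> cells la" for c
  proof -
    have "Q c \<le> max_entry la Q"
      using c by (simp add: max_entry_def finite_cells)
    then show ?thesis
      using c mono_funsD(2,3)[OF B c] by (simp add: shift_by_def)
  qed
  then show ?thesis
    using ssyt_shift_by[OF qyt_ssyt B] Q by (simp add: ssyts_def qyts_def)
qed

lemma ssyts_in_shift_by_image:
  assumes la: "sorted_wrt (\<ge>) la" and T: "T \<in> ssyts m la"
  obtains Q B where "Q \<in> qyts m la" "B \<in> mono_funs (cells la) (std_key Q) (m + 1 - max_entry la Q)"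
    "T = shift_by la Q B"
proof -
  have "ssyt la T" and bounded: "\<forall>c\<in>cells la. T c \<le> m"
    using T by (auto simp: ssyts_def)
  then obtain Q B where Q: "qyt la Q" and B: "B \<in> mono_funs (cells la) (std_key Q) m"
    and TQB: "T = shift_by la Q B"
    using ex_qyt_shift_by[OF la] by blast
  have "Q c \<le> T c" if "c \<in> cells la" for c
    using TQB that mono_funsD(2)[OF B that] by (simp add: shift_by_def)
  then have "Q \<in> qyts m la"
    using Q bounded by (auto simp: qyts_def intro: order_trans)
  moreover have "B \<in> mono_funs (cells la) (std_key Q) (m + 1 - max_entry la Q)"
    using mono_funs_max_entry[OF qyt_ssyt[OF Q] B] bounded TQB by simp
  ultimately show ?thesis
    using that TQB by blast
qed

lemma bij_betw_shift_by:
  assumes la: "sorted_wrt (\<ge>) la"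
  shows "bij_betw (\<lambda>(Q, B). shift_by la Q B)
    (SIGMA Q:qyts m la. mono_funs (cells la) (std_key Q) (m + 1 - max_entry la Q)) (ssyts m la)"
  unfolding bij_betw_def
proof (intro conjI equalityI subsetI)
  show "inj_on (\<lambda>(Q, B). shift_by la Q B)
    (SIGMA Q:qyts m la. mono_funs (cells la) (std_key Q) (m + 1 - max_entry la Q))"
    using shift_by_qyt_inject[OF la] by (auto simp: inj_on_def qyts_def)
next
  fix T assume "T \<in> ssyts m la"
  then show "T \<in> (\<lambda>(Q, B). shift_by la Q B) `
    (SIGMA Q:qyts m la. mono_funs (cells la) (std_key Q) (m + 1 - max_entry la Q))"
    by (rule ssyts_in_shift_by_image[OF la]) force
qed (use shift_by_in_ssyts in auto)

lemma max_entry_qyts: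
  assumes "cells la \<noteq> {}" "Q \<in> qyts m la"
  shows "max_entry la Q \<in> {1..m}"
proof -
  obtain c where c: "c \<in> cells la" "Q c = max_entry la Q"
    using max_entry_eq_iff[OF assms(1), of Q "max_entry la Q"] by blast
  moreover have "qyt la Q" "Q c \<le> m"
    using assms(2) c(1) by (simp_all add: qyts_def)
  ultimately show ?thesis
    using ssyt_pos[OF qyt_ssyt] by fastforce
qed

lemma card_ssyts:
  assumes la: "sorted_wrt (\<ge>) la" and n: "sum_list la = n" "0 < n"
  shows "card (ssyts m la) = (\<Sum>Q\<in>qyts m la. (m - max_entry la Q + n) choose n)"
proof -
  have ne: "cells la \<noteq> {}"
    using n card_cells[of la] by (metis card.empty less_irrefl)
  have "card (ssyts m la)
      = card (SIGMA Q:qyts m la. mono_funs (cells la) (std_key Q) (m + 1 - max_entry la Q))"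
    by (rule bij_betw_same_card[OF bij_betw_shift_by[OF la], symmetric])
  also have "\<dots> = (\<Sum>Q\<in>qyts m la. (m - max_entry la Q + n) choose n)"
  proof (rule trans[OF card_SigmaI sum.cong])
    fix Q assume Q: "Q \<in> qyts m la"
    then have "card (mono_funs (cells la) (std_key Q) (m + 1 - max_entry la Q))
      = (m + 1 - max_entry la Q + n - 1) choose n"
      using card_mono_funs[OF finite_cells inj_on_std_key[OF qyt_ssyt]] card_cells[of la] n
      by (simp add: qyts_def)
    then show "card (mono_funs (cells la) (std_key Q) (m + 1 - max_entry la Q))
      = (m - max_entry la Q + n) choose n"
      using max_entry_qyts[OF ne Q] by simp
  qed (simp_all add: finite_qyts finite_mono_funs finite_cells)
  finally show ?thesis .
qed

lemma SSYT_eq_sum_QYT_eq: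
  assumes la: "sorted_wrt (\<ge>) la" and n: "sum_list la = n" "0 < n"
  shows "SSYT m la = (\<Sum>j = 1..m. QYT_eq j la * ((m - j + n) choose n))"
proof -
  have ne: "cells la \<noteq> {}"
    using n card_cells[of la] by (metis card.empty less_irrefl)
  have "SSYT m la = (\<Sum>Q\<in>qyts m la. (m - max_entry la Q + n) choose n)"
    using card_ssyts[OF la n] by (simp only: SSYT_def ssyts_def)
  also have "\<dots> = (\<Sum>j = 1..m. \<Sum>Q\<in>{Q \<in> qyts m la. max_entry la Q = j}. (m - max_entry la Q + n) choose n)"
    by (rule sum.group[symmetric]) (use max_entry_qyts[OF ne] finite_qyts in auto)
  also have "\<dots> = (\<Sum>j = 1..m. \<Sum>Q\<in>{Q \<in> qyts m la. max_entry la Q = j}. (m - j + n) choose n)"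
    by (rule sum.cong[OF refl], rule sum.cong[OF refl]) simp
  also have "\<dots> = (\<Sum>j = 1..m. QYT_eq j la * ((m - j + n) choose n))"
  proof (rule sum.cong[OF refl])
    fix j assume "j \<in> {1..m}"
    then have "{Q \<in> qyts m la. max_entry la Q = j}
      = {T. qyt la T \<and> (\<forall>c\<in>cells la. T c \<le> j) \<and> (\<exists>c\<in>cells la. T c = j)}"
      using max_entry_eq_iff[OF ne] by (auto simp: qyts_def intro: order_trans)
    then show "(\<Sum>Q\<in>{Q \<in> qyts m la. max_entry la Q = j}. (m - j + n) choose n)
      = QYT_eq j la * ((m - j + n) choose n)"
      by (simp only: QYT_eq_def sum_constant of_nat_id)
  qed
  finally show ?thesis .
qed

theorem mainTheorem4:
  fixes la :: "nat list" and n k :: nat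
  assumes "is_partition la n" and "k \<le> n - 1" and "1 \<le> n"
  shows "int (QYT_eq (k + 1) la) =
    (\<Sum>m = 0..k. int ((n + 1) choose (k - m)) * (-1) ^ (k - m) * int (SSYT (m + 1) la))"
proof -
  have la: "sorted_wrt (\<ge>) la" and n: "sum_list la = n"
    using assms(1) by (simp_all add: is_partition_def)
  have "SSYT (m + 1) la = (\<Sum>j = 0 + 1..m + 1. QYT_eq j la * ((m + 1 - j + n) choose n))" for m
    using SSYT_eq_sum_QYT_eq[OF la n] assms(3) by simp
  then have "int (SSYT (m + 1) la) = (\<Sum>j = 0..m. int (QYT_eq (j + 1) la) * int ((m - j + n) choose n))"
    for m
    unfolding sum.shift_bounds_cl_nat_ivl by simp
  \<comment> \<open>The inversion holds for every k.\<close>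
  then show ?thesis
    by (rule binomial_inversion)
qed

end
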